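(* Let $G_{\lambda,k}$ be a skeleton of a connected graph $G$ with natural map $f$, and let $P_1,P_2$ be paths in $G_{\lambda,k}$ such that $d(u,v)>1$ for all vertices $u\in P_1$, $v\in P_2$. Then, for $M=\min\{\lambda,k\}$, $N_{M/2}(f^{-1}(P_1))\cap N_{M/2}(f^{-1}(P_2))=\emptyset$.
   Context: $d$ is the graph metric. $N_r(S)=\{y: d(s,y)<r\text{ for some } s\in S\}$ (in $G$). A set $X$ is $k$-connected if any two of its points are joined by a finite sequence in $X$ with consecutive distances $\le k$. Skeleton $G_{\lambda,k}$ (root $x_0\in V(G)$, scale $\lambda\ge1$, connectivity $k\ge1$): layers $A_{N,\lambda}=\{x: N\lambda<d(x,x_0)\le(N+1)\lambda\}$, $N\in\mathbb Z$; blocks are the maximal $k$-connected subsets of layers; $G_{\lambda,k}$ has a vertex per block and an edge between two blocks iff an edge of $G$ joins them. The natural map $f$ sends each vertex of $G$ to its block; $f^{-1}(P)$ is the union of the blocks that are vertices of $P$. *)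

theory Defs
  imports Main "HOL-Library.Extended_Nat"
begin

definition graph :: "'a set \<Rightarrow> ('a \<Rightarrow> 'a \<Rightarrow> bool) \<Rightarrow> bool" where
  "graph V E \<longleftrightarrow> (\<forall>x y. E x y \<longrightarrow> x \<in> V \<and> y \<in> V \<and> E y x)"

definition walk :: "('a \<Rightarrow> 'a \<Rightarrow> bool) \<Rightarrow> 'a list \<Rightarrow> bool" where
  "walk E xs \<longleftrightarrow> xs \<noteq> [] \<and> (\<forall>i < length xs - 1. E (xs ! i) (xs ! Suc i))"

definition gdist :: "('a \<Rightarrow> 'a \<Rightarrow> bool) \<Rightarrow> 'a \<Rightarrow> 'a \<Rightarrow> enat" where
  "gdist E x y = (INF xs \<in> {xs. walk E xs \<and> hd xs = x \<and> last xs = y}. enat (length xs - 1))"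

definition connected_graph :: "'a set \<Rightarrow> ('a \<Rightarrow> 'a \<Rightarrow> bool) \<Rightarrow> bool" where
  "connected_graph V E \<longleftrightarrow> graph V E \<and> V \<noteq> {} \<and> (\<forall>x\<in>V. \<forall>y\<in>V. gdist E x y < \<infinity>)"

definition nbhd :: "'a set \<Rightarrow> ('a \<Rightarrow> 'a \<Rightarrow> bool) \<Rightarrow> real \<Rightarrow> 'a set \<Rightarrow> 'a set" where
  "nbhd V E r S = {y \<in> V. \<exists>s\<in>S. \<exists>n::nat. gdist E s y = enat n \<and> real n < r}"

definition kconnected :: "('a \<Rightarrow> 'a \<Rightarrow> bool) \<Rightarrow> nat \<Rightarrow> 'a set \<Rightarrow> bool" where
  "kconnected E k X \<longleftrightarrow> (\<forall>x\<in>X. \<forall>y\<in>X. \<exists>xs. xs \<noteq> [] \<and> hd xs = x \<and> last xs = y \<and> set xs \<subseteq> X \<and>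
      (\<forall>i < length xs - 1. gdist E (xs ! i) (xs ! Suc i) \<le> enat k))"

definition layer :: "'a set \<Rightarrow> ('a \<Rightarrow> 'a \<Rightarrow> bool) \<Rightarrow> 'a \<Rightarrow> real \<Rightarrow> int \<Rightarrow> 'a set" where
  "layer V E x0 lam N = {x \<in> V. \<exists>n::nat. gdist E x x0 = enat n \<and>
      real_of_int N * lam < real n \<and> real n \<le> (real_of_int N + 1) * lam}"

definition blocks :: "'a set \<Rightarrow> ('a \<Rightarrow> 'a \<Rightarrow> bool) \<Rightarrow> 'a \<Rightarrow> real \<Rightarrow> nat \<Rightarrow> 'a set set" where
  "blocks V E x0 lam k = {B. \<exists>N. B \<noteq> {} \<and> B \<subseteq> layer V E x0 lam N \<and> kconnected E k B \<and>
      (\<forall>C. B \<subseteq> C \<and> C \<subseteq> layer V E x0 lam N \<and> kconnected E k C \<longrightarrow> C = B)}"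

definition skel_edge :: "'a set \<Rightarrow> ('a \<Rightarrow> 'a \<Rightarrow> bool) \<Rightarrow> 'a \<Rightarrow> real \<Rightarrow> nat \<Rightarrow> 'a set \<Rightarrow> 'a set \<Rightarrow> bool" where
  "skel_edge V E x0 lam k B1 B2 \<longleftrightarrow> B1 \<in> blocks V E x0 lam k \<and> B2 \<in> blocks V E x0 lam k \<and> B1 \<noteq> B2 \<and>
      (\<exists>x\<in>B1. \<exists>y\<in>B2. E x y)"

definition skel_path :: "'a set \<Rightarrow> ('a \<Rightarrow> 'a \<Rightarrow> bool) \<Rightarrow> 'a \<Rightarrow> real \<Rightarrow> nat \<Rightarrow> 'a set list \<Rightarrow> bool" where
  "skel_path V E x0 lam k P \<longleftrightarrow> set P \<subseteq> blocks V E x0 lam k \<and> distinct P \<and> walk (skel_edge V E x0 lam k) P"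

text \<open>Preimage under the natural map f of a path: union of its blocks.\<close>
definition preim :: "'a set list \<Rightarrow> 'a set" where
  "preim P = \<Union> (set P)"

end

theory Submission
  imports Defs
begin

(* Suppose y lies in both neighbourhoods. Then some s1 in a block B1 of P1 and some s2 in a block
   B2 of P2 are joined by a walk of length m < min(lam, k). As m <= lam, the layers of B1 and B2
   differ by at most one. If they coincide, s2 is within distance k of s1 in the same layer, so
   maximality of blocks gives B1 = B2. Otherwise the walk has an edge ab leaving the lower layer,
   with a in that layer and b in the next one; a is within k of s1 and b within k of s2, so
   maximality puts a into B1 and b into B2. In both cases B1 and B2 are at distance at most 1 in
   the skeleton, contradicting the hypothesis on P1 and P2. *)

lemma relpowp_iff_nth:
  "(R ^^ n) x y \<longleftrightarrow>
    (\<exists>xs. length xs = Suc n \<and> hd xs = x \<and> last xs = y \<and> (\<forall>i<n. R (xs ! i) (xs ! Suc i)))"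
proof
  assume "(R ^^ n) x y"
  then obtain f where f: "f 0 = x" "f n = y" "\<forall>i<n. R (f i) (f (Suc i))"
    by (auto simp: relpowp_fun_conv)
  let ?xs = "map f [0..<Suc n]"
  have "length ?xs = Suc n" "hd ?xs = x" "last ?xs = y" "\<forall>i<n. R (?xs ! i) (?xs ! Suc i)"
    using f by (simp_all add: hd_map last_map del: upt_Suc)
  then show "\<exists>xs. length xs = Suc n \<and> hd xs = x \<and> last xs = y \<and> (\<forall>i<n. R (xs ! i) (xs ! Suc i))"
    by blast
next
  assume "\<exists>xs. length xs = Suc n \<and> hd xs = x \<and> last xs = y \<and> (\<forall>i<n. R (xs ! i) (xs ! Suc i))"
  then obtain xs where xs: "length xs = Suc n" "hd xs = x" "last xs = y"
    and steps: "\<forall>i<n. R (xs ! i) (xs ! Suc i)"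
    by blast
  then have "xs ! 0 = x" "xs ! n = y"
    by (auto simp: hd_conv_nth last_conv_nth simp flip: length_greater_0_conv)
  with steps show "(R ^^ n) x y"
    unfolding relpowp_fun_conv by blast
qed

lemma relpowp_iff_walk:
  "(E ^^ n) x y \<longleftrightarrow> (\<exists>xs. walk E xs \<and> hd xs = x \<and> last xs = y \<and> length xs = Suc n)"
  unfolding relpowp_iff_nth walk_def by (rule ex_cong1) auto

lemma walk_length_Suc: "walk E xs \<Longrightarrow> length xs = Suc (length xs - 1)"
  unfolding walk_def by simp

lemma rtranclp_iff_walk: "E\<^sup>*\<^sup>* x y \<longleftrightarrow> (\<exists>xs. walk E xs \<and> hd xs = x \<and> last xs = y)"
  unfolding rtranclp_power relpowp_iff_walk using walk_length_Suc by blast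

lemma gdist_conv_relpowp: "gdist E x y = (INF n \<in> {n. (E ^^ n) x y}. enat n)"
proof -
  have "(\<lambda>xs. length xs - 1) ` {xs. walk E xs \<and> hd xs = x \<and> last xs = y} = {n. (E ^^ n) x y}"
    unfolding relpowp_iff_walk using walk_length_Suc by (fastforce simp: image_iff)
  then show ?thesis
    unfolding gdist_def by (metis image_image)
qed

lemma gdist_le_relpowp: "(E ^^ n) x y \<Longrightarrow> gdist E x y \<le> enat n"
  unfolding gdist_conv_relpowp by (rule INF_lower) simp

lemma gdist_le_1_if_edge:
  assumes "E x y" shows "gdist E x y \<le> enat 1"
proof -
  have "(E ^^ 1) x y"
    using assms by (simp only: relpowp_1)
  then show ?thesis
    by (rule gdist_le_relpowp)
qed

lemma relpowp_if_gdist_eq: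
  assumes "gdist E x y = enat n" shows "(E ^^ n) x y"
proof -
  let ?A = "enat ` {n. (E ^^ n) x y}"
  have "?A \<noteq> {}"
  proof
    assume "?A = {}"
    then have "gdist E x y = \<infinity>"
      unfolding gdist_conv_relpowp by (simp add: top_enat_def)
    with assms show False by simp
  qed
  then have "Inf ?A \<in> ?A"
    unfolding Inf_enat_def by (auto intro: LeastI)
  then show ?thesis
    using assms unfolding gdist_conv_relpowp by auto
qed

lemma connected_graph_symp: "connected_graph V E \<Longrightarrow> symp E"
  unfolding connected_graph_def graph_def symp_def by blast

lemma relpowp_symp: "symp R \<Longrightarrow> (R ^^ n) x y \<Longrightarrow> (R ^^ n) y x"
proof (induction n arbitrary: y)
  case (Suc n)
  then obtain z where "(R ^^ n) x z" "R z y"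
    by (auto elim: relpowp_Suc_E)
  then have "R y z" "(R ^^ n) z x"
    using Suc by (auto dest: sympD)
  then show ?case
    by (rule relpowp_Suc_I2)
qed simp

lemma gdist_commute: "symp E \<Longrightarrow> gdist E x y = gdist E y x"
proof -
  assume "symp E"
  then have "(E ^^ n) x y \<longleftrightarrow> (E ^^ n) y x" for n
    using relpowp_symp by metis
  then show ?thesis
    unfolding gdist_conv_relpowp by simp
qed

lemma gdist_triangle: "gdist E x z \<le> gdist E x y + gdist E y z"
proof (cases "gdist E x y" ; cases "gdist E y z")
  fix m n assume "gdist E x y = enat m" "gdist E y z = enat n"
  then have "(E ^^ (m + n)) x z"
    by (blast intro: relpowp_trans relpowp_if_gdist_eq)
  with \<open>gdist E x y = enat m\<close> \<open>gdist E y z = enat n\<close> show ?thesis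
    by (simp add: gdist_le_relpowp)
qed simp_all

lemma relpowp_crossing:
  assumes "(R ^^ n) x y" "P x" "\<not> P y"
  obtains i j a b where "i + j + 1 = n" "(R ^^ i) x a" "R a b" "(R ^^ j) b y" "P a" "\<not> P b"
  using assms
proof (induction n arbitrary: x)
  case 0
  then show ?case by simp
next
  case (Suc n)
  then obtain z where "R x z" "(R ^^ n) z y"
    by (blast elim: relpowp_Suc_E2)
  show ?case
  proof (cases "P z")
    case True
    show ?thesis
    proof (rule Suc.IH[OF _ \<open>(R ^^ n) z y\<close> True \<open>\<not> P y\<close>])
      fix i j a b
      assume "i + j + 1 = n" "(R ^^ i) z a" "R a b" "(R ^^ j) b y" "P a" "\<not> P b"
      moreover from \<open>R x z\<close> \<open>(R ^^ i) z a\<close> have "(R ^^ Suc i) x a"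
        by (rule relpowp_Suc_I2)
      ultimately show ?thesis
        using Suc.prems(1)[of "Suc i" j a b] by simp
    qed
  next
    case False
    then show ?thesis
      using Suc.prems(1)[of 0 n x z] \<open>R x z\<close> \<open>(R ^^ n) z y\<close> \<open>P x\<close> by simp
  qed
qed

(* Meaningful only at finite distance from x0, where the_enat is not a junk value. *)
definition layer_index :: "('a \<Rightarrow> 'a \<Rightarrow> bool) \<Rightarrow> 'a \<Rightarrow> real \<Rightarrow> 'a \<Rightarrow> int" where
  "layer_index E x0 lam x = \<lceil>real (the_enat (gdist E x x0)) / lam\<rceil> - 1"

lemma connected_graph_gdist_enat:
  assumes "connected_graph V E" "x \<in> V" "y \<in> V"
  obtains n where "gdist E x y = enat n"
proof -
  have "gdist E x y < \<infinity>"
    using assms unfolding connected_graph_def by blast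
  then show ?thesis
    using that by (cases "gdist E x y") auto
qed

lemma mem_layer_iff:
  assumes "connected_graph V E" "x0 \<in> V" "lam > 0"
  shows "x \<in> layer V E x0 lam N \<longleftrightarrow> x \<in> V \<and> layer_index E x0 lam x = N"
proof (cases "x \<in> V")
  case True
  obtain n where n: "gdist E x x0 = enat n"
    using connected_graph_gdist_enat[OF assms(1) True assms(2)] .
  have "real_of_int N * lam < real n \<and> real n \<le> (real_of_int N + 1) * lam \<longleftrightarrow>
      \<lceil>real n / lam\<rceil> = N + 1"
    using assms(3) by (simp add: ceiling_eq_iff pos_less_divide_eq pos_divide_le_eq)
  then show ?thesis
    using n True unfolding layer_def layer_index_def by auto
qed (simp add: layer_def)

lemma layer_index_le_Suc:
  assumes conn: "connected_graph V E" and "x0 \<in> V" "lam > 0" "x \<in> V" "y \<in> V"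
    and "gdist E x y \<le> enat d" "real d \<le> lam"
  shows "layer_index E x0 lam y \<le> layer_index E x0 lam x + 1"
proof -
  obtain m where m: "gdist E x x0 = enat m"
    using connected_graph_gdist_enat[OF conn \<open>x \<in> V\<close> \<open>x0 \<in> V\<close>] .
  obtain n where n: "gdist E y x0 = enat n"
    using connected_graph_gdist_enat[OF conn \<open>y \<in> V\<close> \<open>x0 \<in> V\<close>] .
  have "gdist E y x \<le> enat d"
    using assms(6) gdist_commute[OF connected_graph_symp[OF conn]] by metis
  have "gdist E y x0 \<le> gdist E y x + gdist E x x0"
    by (rule gdist_triangle)
  also have "\<dots> \<le> enat d + enat m"
    unfolding m by (rule add_right_mono) fact
  finally have "real n \<le> real d + real m"
    using n by simp
  then have "real n / lam \<le> real m / lam + 1"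
    using assms(3,7) by (simp add: field_simps)
  then have "\<lceil>real n / lam\<rceil> \<le> \<lceil>real m / lam\<rceil> + 1"
    using ceiling_mono by fastforce
  then show ?thesis
    unfolding layer_index_def m n by simp
qed

lemma walk_restrict_iff:
  assumes "last xs \<in> X"
  shows "walk (\<lambda>a b. a \<in> X \<and> b \<in> X \<and> R a b) xs \<longleftrightarrow> walk R xs \<and> set xs \<subseteq> X"
proof
  assume walk: "walk (\<lambda>a b. a \<in> X \<and> b \<in> X \<and> R a b) xs"
  have "xs ! i \<in> X" if "i < length xs" for i
  proof (cases "i < length xs - 1")
    case False
    with \<open>i < length xs\<close> have "i = length xs - 1" "xs \<noteq> []"
      by auto
    then have "xs ! i = last xs"
      by (simp add: last_conv_nth)
    with assms show ?thesis by simp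
  qed (use walk in \<open>simp add: walk_def\<close>)
  then show "walk R xs \<and> set xs \<subseteq> X"
    using walk unfolding walk_def by (metis in_set_conv_nth subsetI)
next
  assume "walk R xs \<and> set xs \<subseteq> X"
  then show "walk (\<lambda>a b. a \<in> X \<and> b \<in> X \<and> R a b) xs"
    unfolding walk_def by (simp add: subset_code(1))
qed

definition k_near :: "('a \<Rightarrow> 'a \<Rightarrow> bool) \<Rightarrow> nat \<Rightarrow> 'a set \<Rightarrow> 'a \<Rightarrow> 'a \<Rightarrow> bool" where
  "k_near E k X = (\<lambda>x y. x \<in> X \<and> y \<in> X \<and> gdist E x y \<le> enat k)"

lemma kconnected_iff_rtranclp:
  "kconnected E k X \<longleftrightarrow> (\<forall>x\<in>X. \<forall>y\<in>X. (k_near E k X)\<^sup>*\<^sup>* x y)"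
proof -
  let ?R = "\<lambda>a b. gdist E a b \<le> enat k"
  have "kconnected E k X \<longleftrightarrow>
      (\<forall>x\<in>X. \<forall>y\<in>X. \<exists>xs. walk ?R xs \<and> set xs \<subseteq> X \<and> hd xs = x \<and> last xs = y)"
    unfolding kconnected_def walk_def by (intro ball_cong[OF refl] ex_cong1) blast
  also have "\<dots> \<longleftrightarrow> (\<forall>x\<in>X. \<forall>y\<in>X. \<exists>xs. walk (k_near E k X) xs \<and> hd xs = x \<and> last xs = y)"
  proof (intro ball_cong[OF refl] ex_cong1)
    fix x y xs
    assume "y \<in> X"
    then show "walk ?R xs \<and> set xs \<subseteq> X \<and> hd xs = x \<and> last xs = y \<longleftrightarrow>
        walk (k_near E k X) xs \<and> hd xs = x \<and> last xs = y"
      using walk_restrict_iff[of xs X ?R] unfolding k_near_def by blast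
  qed
  finally show ?thesis
    unfolding rtranclp_iff_walk .
qed

lemma kconnected_Un:
  assumes "kconnected E k X" "kconnected E k Y" "c \<in> X" "c \<in> Y"
  shows "kconnected E k (X \<union> Y)"
proof -
  let ?R = "k_near E k (X \<union> Y)"
  have "k_near E k X \<le> ?R" "k_near E k Y \<le> ?R"
    unfolding k_near_def by auto
  then have X: "(k_near E k X)\<^sup>*\<^sup>* a b \<Longrightarrow> ?R\<^sup>*\<^sup>* a b"
    and Y: "(k_near E k Y)\<^sup>*\<^sup>* a b \<Longrightarrow> ?R\<^sup>*\<^sup>* a b" for a b
    by (auto intro: predicate2D[OF rtranclp_mono])
  have "?R\<^sup>*\<^sup>* x c \<and> ?R\<^sup>*\<^sup>* c x" if "x \<in> X \<union> Y" for x
    using that assms X Y unfolding kconnected_iff_rtranclp by blast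
  then show ?thesis
    unfolding kconnected_iff_rtranclp by (meson rtranclp_trans)
qed

lemma kconnected_doubleton:
  assumes "symp E" "gdist E x y \<le> enat k"
  shows "kconnected E k {x, y}"
proof -
  have "k_near E k {x, y} x y" "k_near E k {x, y} y x"
    using assms gdist_commute[OF assms(1), of x y] by (auto simp: k_near_def)
  then show ?thesis
    unfolding kconnected_iff_rtranclp by auto
qed

definition is_block :: "'a set \<Rightarrow> ('a \<Rightarrow> 'a \<Rightarrow> bool) \<Rightarrow> 'a \<Rightarrow> real \<Rightarrow> nat \<Rightarrow> int \<Rightarrow> 'a set \<Rightarrow> bool" where
  "is_block V E x0 lam k N B \<longleftrightarrow> B \<noteq> {} \<and> B \<subseteq> layer V E x0 lam N \<and> kconnected E k B \<and>
      (\<forall>C. B \<subseteq> C \<and> C \<subseteq> layer V E x0 lam N \<and> kconnected E k C \<longrightarrow> C = B)"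

lemma mem_blocks_iff: "B \<in> blocks V E x0 lam k \<longleftrightarrow> (\<exists>N. is_block V E x0 lam k N B)"
  unfolding blocks_def is_block_def by simp

lemma is_block_absorbs:
  assumes "is_block V E x0 lam k N B" "kconnected E k C" "C \<subseteq> layer V E x0 lam N" "c \<in> B" "c \<in> C"
  shows "C \<subseteq> B"
proof -
  have "kconnected E k (B \<union> C)" "B \<union> C \<subseteq> layer V E x0 lam N"
    using assms kconnected_Un[of E k B C c] unfolding is_block_def by auto
  then have "B \<union> C = B"
    using assms(1) unfolding is_block_def by blast
  then show ?thesis by blast
qed

lemma is_block_unique:
  assumes "is_block V E x0 lam k N B1" "is_block V E x0 lam k N B2" "c \<in> B1" "c \<in> B2"
  shows "B1 = B2"
  using is_block_absorbs[OF assms(1) _ _ assms(3,4)] is_block_absorbs[OF assms(2) _ _ assms(4,3)]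
    assms(1,2) unfolding is_block_def by blast

lemma is_block_absorbs_near:
  assumes "symp E" and "is_block V E x0 lam k N B" "s \<in> B" and "p \<in> layer V E x0 lam N"
    and "gdist E s p \<le> enat k"
  shows "p \<in> B"
proof -
  have "{s, p} \<subseteq> layer V E x0 lam N"
    using assms(2-4) unfolding is_block_def by blast
  then show ?thesis
    using is_block_absorbs[OF assms(2) kconnected_doubleton[OF assms(1,5)]] assms(3) by blast
qed

lemma is_block_layer_index:
  assumes "connected_graph V E" "x0 \<in> V" "lam > 0" "is_block V E x0 lam k N B" "x \<in> B"
  shows "x \<in> V" "layer_index E x0 lam x = N"
proof -
  have "x \<in> layer V E x0 lam N"
    using assms(4,5) unfolding is_block_def by blast
  then show "x \<in> V" "layer_index E x0 lam x = N"
    unfolding mem_layer_iff[OF assms(1-3)] by simp_all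
qed

lemma is_block_absorbs_walk:
  assumes conn: "connected_graph V E" and "x0 \<in> V" "lam > 0"
    and B: "is_block V E x0 lam k N B" "s \<in> B"
    and p: "p \<in> V" "layer_index E x0 lam p = N" and walk: "(E ^^ i) s p" "i \<le> k"
  shows "p \<in> B"
proof -
  have "gdist E s p \<le> enat k"
    using order_trans[OF gdist_le_relpowp[OF walk(1)]] walk(2) by simp
  moreover have "p \<in> layer V E x0 lam N"
    unfolding mem_layer_iff[OF conn \<open>x0 \<in> V\<close> \<open>lam > 0\<close>] using p by simp
  ultimately show ?thesis
    using is_block_absorbs_near[OF connected_graph_symp[OF conn] B] by blast
qed

lemma blocks_same_layer_eq:
  assumes conn: "connected_graph V E" and "x0 \<in> V" "lam > 0"
    and B1: "is_block V E x0 lam k N B1" "s1 \<in> B1" and B2: "is_block V E x0 lam k N B2" "s2 \<in> B2"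
    and walk: "(E ^^ m) s1 s2" "m \<le> k"
  shows "B1 = B2"
proof -
  have "s2 \<in> B1"
    using is_block_absorbs_walk[OF conn \<open>x0 \<in> V\<close> \<open>lam > 0\<close> B1 _ _ walk]
      is_block_layer_index[OF conn \<open>x0 \<in> V\<close> \<open>lam > 0\<close> B2] by blast
  then show ?thesis
    using is_block_unique[OF B1(1) B2(1) _ B2(2)] by blast
qed

lemma blocks_crossing_edge:
  assumes conn: "connected_graph V E" and "x0 \<in> V" and lam: "lam \<ge> 1"
    and B1: "is_block V E x0 lam k N1 B1" "s1 \<in> B1" and B2: "is_block V E x0 lam k N2 B2" "s2 \<in> B2"
    and "N1 < N2" and walk: "(E ^^ m) s1 s2" and m: "real m \<le> lam" "m \<le> k"
  shows "\<exists>a\<in>B1. \<exists>b\<in>B2. E a b"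
proof -
  let ?idx = "layer_index E x0 lam"
  have "lam > 0"
    using lam by simp
  note idx = layer_index_le_Suc[OF conn \<open>x0 \<in> V\<close> \<open>lam > 0\<close>]
  note in_block = is_block_absorbs_walk[OF conn \<open>x0 \<in> V\<close> \<open>lam > 0\<close>]
  have s1: "s1 \<in> V" "?idx s1 = N1" and s2: "s2 \<in> V" "?idx s2 = N2"
    using is_block_layer_index[OF conn \<open>x0 \<in> V\<close> \<open>lam > 0\<close>] B1 B2 by blast+
  have "?idx s2 \<le> ?idx s1 + 1"
    by (rule idx[OF s1(1) s2(1) gdist_le_relpowp[OF walk] m(1)])
  with \<open>N1 < N2\<close> have N2: "N2 = N1 + 1"
    using s1 s2 by simp
  have "?idx s1 \<le> N1" "\<not> ?idx s2 \<le> N1"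
    using s1 s2 \<open>N1 < N2\<close> by simp_all
  \<comment> \<open>the step where the walk leaves the layers up to N1\<close>
  with walk obtain i j a b where ij: "i + j + 1 = m" and "(E ^^ i) s1 a" "E a b" "(E ^^ j) b s2"
    and a: "?idx a \<le> N1" and b: "\<not> ?idx b \<le> N1"
    by (rule relpowp_crossing[where P = "\<lambda>x. ?idx x \<le> N1"])
  have "a \<in> V" "b \<in> V"
    using conn \<open>E a b\<close> unfolding connected_graph_def graph_def by blast+
  moreover have "gdist E a b \<le> enat 1"
    using \<open>E a b\<close> by (rule gdist_le_1_if_edge)
  moreover have "real 1 \<le> lam"
    using lam by simp
  ultimately have "?idx b \<le> ?idx a + 1"
    by (rule idx)
  with a b N2 have "?idx a = N1" "?idx b = N2"
    by simp_all
  have "i \<le> k" "j \<le> k"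
    using ij m(2) by simp_all
  have "a \<in> B1"
    by (rule in_block[OF B1 \<open>a \<in> V\<close> \<open>?idx a = N1\<close> \<open>(E ^^ i) s1 a\<close> \<open>i \<le> k\<close>])
  moreover have "b \<in> B2"
    using relpowp_symp[OF connected_graph_symp[OF conn] \<open>(E ^^ j) b s2\<close>]
    by (rule in_block[OF B2 \<open>b \<in> V\<close> \<open>?idx b = N2\<close> _ \<open>j \<le> k\<close>])
  ultimately show ?thesis
    using \<open>E a b\<close> by blast
qed

lemma skel_gdist_le_1:
  assumes conn: "connected_graph V E" and "x0 \<in> V" and "lam \<ge> 1"
    and blocks: "B1 \<in> blocks V E x0 lam k" "B2 \<in> blocks V E x0 lam k"
    and s: "s1 \<in> B1" "s2 \<in> B2" and walk: "(E ^^ m) s1 s2" and m: "real m \<le> lam" "m \<le> k"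
  shows "gdist (skel_edge V E x0 lam k) B1 B2 \<le> 1"
proof (cases "B1 = B2")
  case True
  then show ?thesis
    using gdist_le_relpowp[OF relpowp_0_I, of "skel_edge V E x0 lam k" B2] by (simp add: zero_enat_def[symmetric])
next
  case False
  obtain N1 N2 where B1: "is_block V E x0 lam k N1 B1" and B2: "is_block V E x0 lam k N2 B2"
    using blocks unfolding mem_blocks_iff by blast
  have "lam > 0"
    using \<open>lam \<ge> 1\<close> by simp
  consider "N1 = N2" | "N1 < N2" | "N2 < N1"
    by linarith
  then have "\<exists>a\<in>B1. \<exists>b\<in>B2. E a b"
  proof cases
    case 1
    then show ?thesis
      using blocks_same_layer_eq[OF conn \<open>x0 \<in> V\<close> \<open>lam > 0\<close> B1 s(1) _ s(2) walk m(2)] B2 False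
      by simp
  next
    case 2
    show ?thesis
      by (rule blocks_crossing_edge[OF conn \<open>x0 \<in> V\<close> \<open>lam \<ge> 1\<close> B1 s(1) B2 s(2) 2 walk m])
  next
    case 3
    have "\<exists>b\<in>B2. \<exists>a\<in>B1. E b a"
      by (rule blocks_crossing_edge[OF conn \<open>x0 \<in> V\<close> \<open>lam \<ge> 1\<close> B2 s(2) B1 s(1) 3
            relpowp_symp[OF connected_graph_symp[OF conn] walk] m])
    then show ?thesis
      using connected_graph_symp[OF conn] by (blast dest: sympD)
  qed
  then have "skel_edge V E x0 lam k B1 B2"
    using blocks False unfolding skel_edge_def by blast
  then show ?thesis
    using gdist_le_1_if_edge by (simp add: one_enat_def)
qed

lemma nbhds_meet_obtain_walk:
  assumes "symp E" "y \<in> nbhd V E r S1" "y \<in> nbhd V E r S2"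
  obtains s1 s2 n where "s1 \<in> S1" "s2 \<in> S2" "(E ^^ n) s1 s2" "real n < 2 * r"
proof -
  obtain s1 n1 where s1: "s1 \<in> S1" "gdist E s1 y = enat n1" "real n1 < r"
    using assms(2) unfolding nbhd_def by blast
  obtain s2 n2 where s2: "s2 \<in> S2" "gdist E s2 y = enat n2" "real n2 < r"
    using assms(3) unfolding nbhd_def by blast
  have "(E ^^ (n1 + n2)) s1 s2"
    using relpowp_if_gdist_eq[OF s1(2)] relpowp_symp[OF assms(1) relpowp_if_gdist_eq[OF s2(2)]]
    by (rule relpowp_trans)
  moreover have "real (n1 + n2) < 2 * r"
    using s1(3) s2(3) by simp
  ultimately show ?thesis
    using that s1(1) s2(1) by blast
qed

theorem corollary8:
  fixes V :: "'a set" and E :: "'a \<Rightarrow> 'a \<Rightarrow> bool" and x0 :: 'a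
    and lam :: real and k :: nat and P1 P2 :: "'a set list"
  assumes "connected_graph V E" and "x0 \<in> V" and "lam \<ge> 1" and "k \<ge> 1"
    and "skel_path V E x0 lam k P1" and "skel_path V E x0 lam k P2"
    and "\<forall>u\<in>set P1. \<forall>v\<in>set P2. gdist (skel_edge V E x0 lam k) u v > 1"
  shows "nbhd V E (min lam (real k) / 2) (preim P1) \<inter> nbhd V E (min lam (real k) / 2) (preim P2) = {}"
proof (rule equals0I)
  fix y
  assume "y \<in> nbhd V E (min lam (real k) / 2) (preim P1) \<inter> nbhd V E (min lam (real k) / 2) (preim P2)"
  then obtain s1 s2 n where "s1 \<in> preim P1" "s2 \<in> preim P2" and walk: "(E ^^ n) s1 s2"
    and n: "real n < 2 * (min lam (real k) / 2)"
    using nbhds_meet_obtain_walk[OF connected_graph_symp[OF assms(1)]] by blast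
  then obtain B1 B2 where B: "B1 \<in> set P1" "B2 \<in> set P2" "s1 \<in> B1" "s2 \<in> B2"
    unfolding preim_def by blast
  then have "B1 \<in> blocks V E x0 lam k" "B2 \<in> blocks V E x0 lam k"
    using assms(5,6) unfolding skel_path_def by blast+
  moreover have "real n \<le> lam" "n \<le> k"
    using n by simp_all
  ultimately have "gdist (skel_edge V E x0 lam k) B1 B2 \<le> 1"
    using skel_gdist_le_1[OF assms(1-3)] B(3,4) walk by blast
  with assms(7) B(1,2) show False
    by (simp add: not_less[symmetric])
qed
end
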